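(* Let $(X,Y)\sim H$ with marginal distribution functions $F$ (of $X$) and $G$ (of $Y$). Then $(X,Y)$ is quasi-independent if and only if $$\mathbb P(X\in A,Y\in B)+\mathbb P(X\in B,Y\in A)=\mathbb P(X\in A)\mathbb P(Y\in B)+\mathbb P(X\in B)\mathbb P(Y\in A)$$ for all Borel sets $A,B\subseteq\mathbb R$.
   Context: $(X,Y)$ is quasi-independent if $\frac{H(x,y)+H(y,x)}{2}=\frac12F(x)G(y)+\frac12F(y)G(x)$ for all $x,y\in\mathbb R$, where $H$ is the joint distribution function. *)

theory Defs
  imports "HOL-Probability.Probability"
begin

definition joint_cdf :: "'a measure \<Rightarrow> ('a \<Rightarrow> real) \<Rightarrow> ('a \<Rightarrow> real) \<Rightarrow> real \<Rightarrow> real \<Rightarrow> real" where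
  "joint_cdf M X Y x y = measure M {\<omega> \<in> space M. X \<omega> \<le> x \<and> Y \<omega> \<le> y}"

definition marg_cdf :: "'a measure \<Rightarrow> ('a \<Rightarrow> real) \<Rightarrow> real \<Rightarrow> real" where
  "marg_cdf M X x = measure M {\<omega> \<in> space M. X \<omega> \<le> x}"

definition quasi_independent :: "'a measure \<Rightarrow> ('a \<Rightarrow> real) \<Rightarrow> ('a \<Rightarrow> real) \<Rightarrow> bool" where
  "quasi_independent M X Y \<longleftrightarrow>
     (\<forall>x y. (joint_cdf M X Y x y + joint_cdf M X Y y x) / 2 =
            marg_cdf M X x * marg_cdf M Y y / 2 + marg_cdf M X y * marg_cdf M Y x / 2)"

end

theory Submission
  imports Defs
begin

text \<open>For fixed \<open>B\<close> the defect between the two sides of the claimed identity is a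
  finite signed measure in \<open>A\<close> (a difference of finite measures). It vanishes on \<open>\<real>\<close>, and
  quasi-independence says that it vanishes on all half-lines \<open>{..a}\<close> when \<open>B\<close> is a
  half-line. Half-lines form an intersection-stable generator of the Borel sets, so
  Dynkin's \<open>\<pi>\<close>-\<open>\<lambda>\<close> argument extends the vanishing first to Borel \<open>A\<close> and then, by
  the symmetry of the defect, to Borel \<open>B\<close>.\<close>

lemma sigma_additive_eq_0_on_borel_if_atMost:
  fixes \<mu> :: "real set \<Rightarrow> real"
  assumes atMost: "\<And>a. \<mu> {..a} = 0"
    and empty: "\<mu> {} = 0" and UNIV: "\<mu> UNIV = 0"
    and sums: "\<And>f. disjoint_family f \<Longrightarrow> range f \<subseteq> sets borel \<Longrightarrow>
                 (\<lambda>i. \<mu> (f i)) sums \<mu> (\<Union>i. f i)"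
    and A: "A \<in> sets borel"
  shows "\<mu> A = 0"
proof -
  let ?G = "range (\<lambda>a. {..a::real})"
  have "Int_stable ?G" "?G \<subseteq> Pow UNIV" "A \<in> sigma_sets UNIV ?G"
    using A by (auto simp: borel_eq_atMost Int_stable_def)
  then show ?thesis
  proof (induction rule: sigma_sets_induct_disjoint)
    case (basic A)
    then show ?case using atMost by auto
  next
    case empty
    show ?case by (fact empty)
  next
    case (compl A)
    have "A \<in> sets borel"
      using compl(1) by (simp add: borel_eq_atMost)
    then have "disjoint_family (binaryset A (UNIV - A))" "range (binaryset A (UNIV - A)) \<subseteq> sets borel"
      by (auto simp: disjoint_family_on_def binaryset_def)
    then have "(\<lambda>i. \<mu> (binaryset A (UNIV - A) i)) sums \<mu> UNIV"
      using sums[of "binaryset A (UNIV - A)"] by (simp add: UN_binaryset_eq)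
    then have "\<mu> A + \<mu> (UNIV - A) = \<mu> UNIV"
      using binaryset_sums[of \<mu>, OF empty] by (rule sums_unique2[rotated])
    then show ?case using compl(2) UNIV by simp
  next
    case (union f)
    then have "(\<lambda>i. \<mu> (f i)) sums \<mu> (\<Union>i. f i)"
      by (intro sums) (auto simp: borel_eq_atMost)
    moreover have "(\<lambda>i. \<mu> (f i)) sums 0"
      using union(3) by (intro sums_0)
    ultimately show ?case by (rule sums_unique2)
  qed
qed

lemma (in finite_measure) sums_measure_vimage_pred:
  assumes "X \<in> measurable M N" "Measurable.pred M P"
    and "disjoint_family f" "range f \<subseteq> sets N"
  shows "(\<lambda>i. measure M {\<omega> \<in> space M. X \<omega> \<in> f i \<and> P \<omega>})
           sums measure M {\<omega> \<in> space M. X \<omega> \<in> (\<Union>i. f i) \<and> P \<omega>}"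
proof -
  have "(\<lambda>i. measure M {\<omega> \<in> space M. X \<omega> \<in> f i \<and> P \<omega>})
          sums measure M (\<Union>i. {\<omega> \<in> space M. X \<omega> \<in> f i \<and> P \<omega>})"
    using assms by (intro finite_measure_UNION) (auto simp: disjoint_family_on_def)
  moreover have "(\<Union>i. {\<omega> \<in> space M. X \<omega> \<in> f i \<and> P \<omega>}) =
                 {\<omega> \<in> space M. X \<omega> \<in> (\<Union>i. f i) \<and> P \<omega>}"
    by auto
  ultimately show ?thesis by simp
qed

definition quasi_independence_defect ::
    "'a measure \<Rightarrow> ('a \<Rightarrow> real) \<Rightarrow> ('a \<Rightarrow> real) \<Rightarrow> real set \<Rightarrow> real set \<Rightarrow> real" where
  "quasi_independence_defect M X Y A B =
       measure M {\<omega> \<in> space M. X \<omega> \<in> A \<and> Y \<omega> \<in> B}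
     + measure M {\<omega> \<in> space M. X \<omega> \<in> B \<and> Y \<omega> \<in> A}
     - (measure M {\<omega> \<in> space M. X \<omega> \<in> A} * measure M {\<omega> \<in> space M. Y \<omega> \<in> B}
      + measure M {\<omega> \<in> space M. X \<omega> \<in> B} * measure M {\<omega> \<in> space M. Y \<omega> \<in> A})"

lemma quasi_independence_defect_commute:
  "quasi_independence_defect M X Y A B = quasi_independence_defect M X Y B A"
  unfolding quasi_independence_defect_def by simp

lemma quasi_independence_defect_empty:
  "quasi_independence_defect M X Y {} B = 0"
  unfolding quasi_independence_defect_def by simp

lemma (in prob_space) quasi_independence_defect_UNIV:
  "quasi_independence_defect M X Y UNIV B = 0"
  unfolding quasi_independence_defect_def by (simp add: prob_space)

lemma (in finite_measure) quasi_independence_defect_sums: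
  assumes [measurable]: "X \<in> borel_measurable M" "Y \<in> borel_measurable M" "B \<in> sets borel"
    and f: "disjoint_family f" "range f \<subseteq> sets borel"
  shows "(\<lambda>i. quasi_independence_defect M X Y (f i) B) sums quasi_independence_defect M X Y (\<Union>i. f i) B"
proof -
  have XY: "(\<lambda>i. measure M {\<omega> \<in> space M. X \<omega> \<in> f i \<and> Y \<omega> \<in> B})
              sums measure M {\<omega> \<in> space M. X \<omega> \<in> (\<Union>i. f i) \<and> Y \<omega> \<in> B}"
    using f by (intro sums_measure_vimage_pred) auto
  have YX: "(\<lambda>i. measure M {\<omega> \<in> space M. X \<omega> \<in> B \<and> Y \<omega> \<in> f i})
              sums measure M {\<omega> \<in> space M. X \<omega> \<in> B \<and> Y \<omega> \<in> (\<Union>i. f i)}"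
    using sums_measure_vimage_pred[of Y borel "\<lambda>\<omega>. X \<omega> \<in> B", OF _ _ f]
    by (simp add: conj_commute)
  have X: "(\<lambda>i. measure M {\<omega> \<in> space M. X \<omega> \<in> f i}) sums measure M {\<omega> \<in> space M. X \<omega> \<in> (\<Union>i. f i)}"
    using sums_measure_vimage_pred[of X borel "\<lambda>_. True", OF _ _ f] by simp
  have Y: "(\<lambda>i. measure M {\<omega> \<in> space M. Y \<omega> \<in> f i}) sums measure M {\<omega> \<in> space M. Y \<omega> \<in> (\<Union>i. f i)}"
    using sums_measure_vimage_pred[of Y borel "\<lambda>_. True", OF _ _ f] by simp
  show ?thesis
    unfolding quasi_independence_defect_def
    by (intro sums_diff sums_add sums_mult sums_mult2 XY YX X Y)
qed

lemma quasi_independent_iff_defect_atMost: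
  "quasi_independent M X Y \<longleftrightarrow> (\<forall>a b. quasi_independence_defect M X Y {..a} {..b} = 0)"
proof -
  have "(p + q) / 2 = r / 2 + s / 2 \<longleftrightarrow> p + q - (r + s) = 0" for p q r s :: real
    by (auto simp: field_simps)
  then show ?thesis
    unfolding quasi_independent_def quasi_independence_defect_def joint_cdf_def marg_cdf_def
    by (simp only: atMost_iff)
qed

lemma (in prob_space) quasi_independence_defect_eq_0_if_atMost:
  assumes "X \<in> borel_measurable M" "Y \<in> borel_measurable M"
    and "A \<in> sets borel" "B \<in> sets borel"
    and "\<And>a. quasi_independence_defect M X Y {..a} B = 0"
  shows "quasi_independence_defect M X Y A B = 0"
proof (rule sigma_additive_eq_0_on_borel_if_atMost[where \<mu>="\<lambda>A. quasi_independence_defect M X Y A B"])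
  show "(\<lambda>i. quasi_independence_defect M X Y (f i) B) sums quasi_independence_defect M X Y (\<Union>i. f i) B"
    if "disjoint_family f" "range f \<subseteq> sets borel" for f
    using assms(1,2,4) that by (rule quasi_independence_defect_sums)
qed (fact assms(3,5) quasi_independence_defect_empty quasi_independence_defect_UNIV)+

theorem lemma1:
  fixes M :: "'a measure" and X Y :: "'a \<Rightarrow> real"
  assumes "prob_space M"
    and "X \<in> borel_measurable M" and "Y \<in> borel_measurable M"
  shows "quasi_independent M X Y \<longleftrightarrow>
    (\<forall>A \<in> sets borel. \<forall>B \<in> sets borel.
       measure M {\<omega> \<in> space M. X \<omega> \<in> A \<and> Y \<omega> \<in> B}
     + measure M {\<omega> \<in> space M. X \<omega> \<in> B \<and> Y \<omega> \<in> A}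
     = measure M {\<omega> \<in> space M. X \<omega> \<in> A} * measure M {\<omega> \<in> space M. Y \<omega> \<in> B}
     + measure M {\<omega> \<in> space M. X \<omega> \<in> B} * measure M {\<omega> \<in> space M. Y \<omega> \<in> A})"
proof -
  interpret prob_space M by fact
  let ?D = "quasi_independence_defect M X Y"
  have "quasi_independent M X Y \<longleftrightarrow> (\<forall>A \<in> sets borel. \<forall>B \<in> sets borel. ?D A B = 0)"
  proof
    assume "quasi_independent M X Y"
    then have atMost: "?D {..a} {..b} = 0" for a b
      by (simp add: quasi_independent_iff_defect_atMost)
    have half_line: "?D A {..b} = 0" if "A \<in> sets borel" for A b
      using assms(2,3) that atMost_borel atMost by (rule quasi_independence_defect_eq_0_if_atMost)
    show "\<forall>A \<in> sets borel. \<forall>B \<in> sets borel. ?D A B = 0"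
    proof (intro ballI)
      fix A B :: "real set"
      assume A: "A \<in> sets borel" and B: "B \<in> sets borel"
      have "?D {..a} A = 0" for a
        using half_line[OF A] by (metis quasi_independence_defect_commute)
      with assms(2,3) B A have "?D B A = 0"
        by (rule quasi_independence_defect_eq_0_if_atMost)
      then show "?D A B = 0"
        by (metis quasi_independence_defect_commute)
    qed
  next
    assume "\<forall>A \<in> sets borel. \<forall>B \<in> sets borel. ?D A B = 0"
    then show "quasi_independent M X Y"
      unfolding quasi_independent_iff_defect_atMost by (blast intro: atMost_borel)
  qed
  then show ?thesis
    unfolding quasi_independence_defect_def by simp
qed

end
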